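(* For every test-fee structure and threshold $(G,\phi,\tau)$ satisfying (w-P) and (w-HE), there exists a sequence of test-fee structures and thresholds $(G^n,\phi^n,\tau^n)_{n\ge1}$ such that (i) each $(G^n,\phi^n,\tau^n)$ satisfies (P) and (HE), (ii) $G^n\to G$ weakly and $\phi^n\to\phi$, and (iii) $\hat R(G,\phi,\tau)\le\lim_{n\to\infty}\hat R(G^n,\phi^n,\tau^n)$.
   Context: The asset value $\theta\sim F$ with support in $[\underline{\theta},\overline{\theta}]$ ($0\le\underline{\theta}<\overline{\theta}<\infty$ the extreme support points) and mean $\mu$. A test-fee structure $(G,\phi)$ consists of a CDF $G$ that is a mean-preserving contraction of $F$ (the score distribution of an unbiased test) and fees $\phi=(\phi_t,\phi_d)\in\mathbb{R}^2$ (testing, disclosure). Let $\underline{s}_G$ be the lowest support point of $G$ and $\hat R(G,\phi,\tau)=\phi_t+\phi_d(1-G(\tau))$. Constraints: (P) $\phi_t<\int_{\mu+\phi_d}^{\overline{\theta}}[s-(\mu+\phi_d)]dG(s)$; (w-P) the same with $\le$; (HE) $\tau\ge\underline{s}_G$, $\tau-\phi_d=E_G[s\mid s\le\tau]$ and $\tau'-\phi_d>E_G[s\mid s\le\tau']$ for all $\tau'>\tau$; (w-HE) $\tau-\phi_d=E_G[s\mid s\le\tau]$ and $\tau'-\phi_d\ge E_G[s\mid s\le\tau']$ for all $\tau'>\tau$. *)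

theory Defs
  imports "HOL-Probability.Probability"
begin

definition is_dist :: "real measure \<Rightarrow> bool" where
  "is_dist G \<longleftrightarrow> prob_space G \<and> sets G = sets borel"

definition mean :: "real measure \<Rightarrow> real" where
  "mean G = (\<integral>s. s \<partial>G)"

text \<open>G is a mean-preserving contraction of F (F is a mean-preserving spread of G):
  equal means and integrated CDF of G below integrated CDF of F everywhere.\<close>
definition mpc :: "real measure \<Rightarrow> real measure \<Rightarrow> bool" where
  "mpc G F \<longleftrightarrow> is_dist G \<and> is_dist F \<and> integrable G (\<lambda>s. s) \<and> integrable F (\<lambda>s. s)
     \<and> mean G = mean F
     \<and> (\<forall>x. (\<integral>t\<in>{..x}. cdf G t \<partial>lborel) \<le> (\<integral>t\<in>{..x}. cdf F t \<partial>lborel))"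

definition low_supp :: "real measure \<Rightarrow> real" where
  "low_supp G = Inf {x. cdf G x > 0}"

text \<open>Conditional mean E_G[s | s \<le> tau]; when G(tau) = 0 (only possible for
  tau \<le> lowest support point) we use the limit value, the lowest support point.\<close>
definition cond_mean_below :: "real measure \<Rightarrow> real \<Rightarrow> real" where
  "cond_mean_below G tau =
     (if cdf G tau > 0 then (\<integral>s\<in>{..tau}. s \<partial>G) / cdf G tau else low_supp G)"

definition Rhat :: "real measure \<Rightarrow> real \<Rightarrow> real \<Rightarrow> real \<Rightarrow> real" where
  "Rhat G phit phid tau = phit + phid * (1 - cdf G tau)"

definition cond_P :: "real \<Rightarrow> real \<Rightarrow> real measure \<Rightarrow> real \<Rightarrow> real \<Rightarrow> bool" where
  "cond_P mu thi G phit phid \<longleftrightarrow>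
     phit < (\<integral>s\<in>{mu + phid..thi}. (s - (mu + phid)) \<partial>G)"

definition cond_wP :: "real \<Rightarrow> real \<Rightarrow> real measure \<Rightarrow> real \<Rightarrow> real \<Rightarrow> bool" where
  "cond_wP mu thi G phit phid \<longleftrightarrow>
     phit \<le> (\<integral>s\<in>{mu + phid..thi}. (s - (mu + phid)) \<partial>G)"

definition cond_HE :: "real measure \<Rightarrow> real \<Rightarrow> real \<Rightarrow> bool" where
  "cond_HE G phid tau \<longleftrightarrow> tau \<ge> low_supp G \<and> tau - phid = cond_mean_below G tau
     \<and> (\<forall>tau'>tau. tau' - phid > cond_mean_below G tau')"

text \<open>Weak HE; the requirement tau \<ge> lowest support point is part of the conditional
  mean being defined.\<close>
definition cond_wHE :: "real measure \<Rightarrow> real \<Rightarrow> real \<Rightarrow> bool" where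
  "cond_wHE G phid tau \<longleftrightarrow> tau \<ge> low_supp G \<and> tau - phid = cond_mean_below G tau
     \<and> (\<forall>tau'>tau. tau' - phid \<ge> cond_mean_below G tau')"

end

theory Submission
  imports Defs
begin

text \<open>
  The score distribution \<open>G\<close> is kept fixed. Lowering the test fee by \<open>1/(n+1)\<close> turns (w-P)
  into (P), and (P) only gets easier when the disclosure fee decreases. For a disclosure fee
  \<open>c \<ge> 0\<close>, the supremum of the set where the gap \<open>(t - c) G(t) - \<integral>\<^bsub>s \<le> t\<^esub> s dG\<close> is nonpositive
  satisfies (HE): the increments of the partial mean lie between \<open>t\<close> and \<open>t'\<close> times the
  increment of \<open>G\<close>, which forces the gap to vanish there. These thresholds increase with \<open>c\<close>
  and, by (w-HE), stay below \<open>tau\<close> while \<open>c < phid\<close>; letting \<open>c\<close> increase to \<open>phid\<close>, the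
  revenues therefore converge to a limit of at least \<open>Rhat G phit phid tau\<close>. The thresholds exist
  because \<open>G\<close> has a lowest support point: far to the left of the support of \<open>F\<close> the
  integrated CDF of \<open>F\<close> vanishes, hence so does that of \<open>G\<close>.
\<close>

lemma (in real_distribution) nn_integral_cdf_atMost:
  "(\<integral>\<^sup>+t. indicator {..x} t * ennreal (cdf M t) \<partial>lborel) = (\<integral>\<^sup>+s. ennreal (x - s) \<partial>M)"
proof -
  interpret pair_sigma_finite M lborel ..
  define f :: "real \<Rightarrow> real \<Rightarrow> ennreal" where
    "f s t = indicator {p. fst p \<le> snd p \<and> snd p \<le> x} (s, t)" for s t
  have "{p::real \<times> real. fst p \<le> snd p \<and> snd p \<le> x} \<in> sets (borel \<Otimes>\<^sub>M borel)"
    unfolding borel_prod by (intro borel_closed closed_Collect_conj closed_Collect_le continuous_intros)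
  then have "case_prod f \<in> borel_measurable (borel \<Otimes>\<^sub>M borel)"
    unfolding f_def by simp
  moreover have "sets (M \<Otimes>\<^sub>M lborel) = sets (borel \<Otimes>\<^sub>M borel)"
    by (intro sets_pair_measure_cong) auto
  ultimately have f_measurable: "case_prod f \<in> borel_measurable (M \<Otimes>\<^sub>M lborel)"
    using measurable_cong_sets[OF _ refl] by blast
  have "(\<integral>\<^sup>+t. indicator {..x} t * ennreal (cdf M t) \<partial>lborel)
      = (\<integral>\<^sup>+t. (\<integral>\<^sup>+s. f s t \<partial>M) \<partial>lborel)"
  proof (intro nn_integral_cong)
    fix t
    have "(\<lambda>s. f s t) = (\<lambda>s. indicator {..x} t * indicator {..t} s)"
      by (auto simp: f_def indicator_def)
    then show "indicator {..x} t * ennreal (cdf M t) = (\<integral>\<^sup>+s. f s t \<partial>M)"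
      by (simp add: nn_integral_cmult_indicator cdf_def emeasure_eq_measure)
  qed
  also have "\<dots> = (\<integral>\<^sup>+s. (\<integral>\<^sup>+t. f s t \<partial>lborel) \<partial>M)"
    by (rule Fubini'[OF f_measurable])
  also have "\<dots> = (\<integral>\<^sup>+s. ennreal (x - s) \<partial>M)"
  proof (intro nn_integral_cong)
    fix s
    have "(\<lambda>t. f s t) = indicator {s..x}"
      by (auto simp: f_def indicator_def)
    then have "(\<integral>\<^sup>+t. f s t \<partial>lborel) = emeasure lborel {s..x}"
      by simp
    then show "(\<integral>\<^sup>+t. f s t \<partial>lborel) = ennreal (x - s)"
      by (cases "s \<le> x") (auto simp: ennreal_lt_0)
  qed
  finally show ?thesis .
qed

lemma (in real_distribution) cdf_eq_0_below_support:
  assumes "measure M {a..b} = 1" "s < a"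
  shows "cdf M s = 0"
proof -
  have "cdf M s \<le> measure M (space M - {a..b})"
    unfolding cdf_def using assms(2) by (intro finite_measure_mono) auto
  also have "\<dots> = 0" using prob_compl[of "{a..b}"] assms(1) by simp
  finally show ?thesis using cdf_nonneg[of s] by linarith
qed

locale integrable_real_distribution = real_distribution +
  assumes integrable_id: "integrable M (\<lambda>s. s)"
begin

definition partial_mean :: "real \<Rightarrow> real" where
  "partial_mean t = (\<integral>s\<in>{..t}. s \<partial>M)"

lemma set_integrable_id: "set_integrable M A (\<lambda>s. s)" if "A \<in> sets borel"
  using that integrable_id unfolding set_integrable_def
  by (intro integrable_mult_indicator) auto

lemma partial_mean_diff:
  assumes "t < t'"
  shows "partial_mean t' - partial_mean t = (\<integral>s\<in>{t<..t'}. s \<partial>M)"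
proof -
  have "{..t'} = {..t} \<union> {t<..t'}" using assms by auto
  then show ?thesis
    unfolding partial_mean_def
    by (simp add: set_integral_Un set_integrable_id ivl_disj_int_one(3))
qed

lemma partial_mean_increment_bounds:
  assumes "t \<le> t'"
  shows "t * (cdf M t' - cdf M t) \<le> partial_mean t' - partial_mean t"
    and "partial_mean t' - partial_mean t \<le> t' * (cdf M t' - cdf M t)"
proof -
  have *: "(\<integral>s\<in>{t<..t'}. a \<partial>M) = a * (cdf M t' - cdf M t)" if "t < t'" for a
    using that by (simp add: set_integral_const cdf_diff_eq emeasure_eq_measure)
  have "t * (cdf M t' - cdf M t) \<le> partial_mean t' - partial_mean t \<and>
        partial_mean t' - partial_mean t \<le> t' * (cdf M t' - cdf M t)"
  proof (cases "t = t'")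
    case False
    with assms have "t < t'" by simp
    then show ?thesis
      unfolding partial_mean_diff[OF \<open>t < t'\<close>] *[OF \<open>t < t'\<close>, symmetric]
      by (auto intro!: set_integral_mono set_integrable_id
          simp: set_integrable_def integrable_indicator_iff less_top[symmetric])
  qed simp
  then show "t * (cdf M t' - cdf M t) \<le> partial_mean t' - partial_mean t"
    and "partial_mean t' - partial_mean t \<le> t' * (cdf M t' - cdf M t)" by auto
qed

lemma partial_mean_eq_0:
  assumes "cdf M t = 0"
  shows "partial_mean t = 0"
proof -
  have "AE s in M. s \<notin> {..t}"
    using assms by (intro AE_not_in) (auto simp: cdf_def null_sets_def emeasure_eq_measure)
  then have "(\<integral>s. indicator {..t} s * s \<partial>M) = (\<integral>s. 0 \<partial>M)"
    by (intro integral_cong_AE) auto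
  then show ?thesis by (simp add: partial_mean_def set_lebesgue_integral_def)
qed

lemma partial_mean_le: "partial_mean t \<le> t * cdf M t"
proof -
  have "partial_mean t \<le> (\<integral>s\<in>{..t}. t \<partial>M)"
    unfolding partial_mean_def
    by (intro set_integral_mono set_integrable_id)
      (auto simp: set_integrable_def integrable_indicator_iff less_top[symmetric])
  also have "\<dots> = t * cdf M t"
    by (simp add: set_integral_const cdf_def emeasure_eq_measure)
  finally show ?thesis .
qed

text \<open>Where \<open>G(t) > 0\<close> the gap equals \<open>G(t) ((t - c) - E[s | s \<le> t])\<close>, so its zeros and positivity
  are exactly the two conditions of (HE) at disclosure fee \<open>c\<close>.\<close>

definition he_gap :: "real \<Rightarrow> real \<Rightarrow> real" where
  "he_gap c t = (t - c) * cdf M t - partial_mean t"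

lemma he_gap_eq_0: "cdf M t = 0 \<Longrightarrow> he_gap c t = 0"
  by (simp add: he_gap_def partial_mean_eq_0)

lemma he_gap_antimono: "c \<le> c' \<Longrightarrow> he_gap c' t \<le> he_gap c t"
  unfolding he_gap_def using cdf_nonneg[of t] by (simp add: algebra_simps mult_right_mono)

lemma he_gap_increment_upper:
  assumes "t \<le> t'"
  shows "he_gap c t' \<le> he_gap c t + (t' - t) * cdf M t' - c * (cdf M t' - cdf M t)"
  using partial_mean_increment_bounds(1)[OF assms] by (simp add: he_gap_def algebra_simps)

lemma he_gap_increment_lower:
  assumes "t \<le> t'"
  shows "he_gap c t + (t' - t) * cdf M t - c * (cdf M t' - cdf M t) \<le> he_gap c t'"
  using partial_mean_increment_bounds(2)[OF assms] by (simp add: he_gap_def algebra_simps)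

lemma cond_mean_below_eq:
  "cdf M t > 0 \<Longrightarrow> cond_mean_below M t = partial_mean t / cdf M t"
  by (simp add: cond_mean_below_def partial_mean_def)

lemma he_gap_pos_iff:
  "cdf M t > 0 \<Longrightarrow> 0 < he_gap c t \<longleftrightarrow> cond_mean_below M t < t - c"
  by (simp add: cond_mean_below_eq he_gap_def divide_less_eq)

lemma he_gap_eq_0_iff:
  "cdf M t > 0 \<Longrightarrow> he_gap c t = 0 \<longleftrightarrow> t - c = cond_mean_below M t"
  by (auto simp: cond_mean_below_eq he_gap_def eq_divide_eq)

lemma set_integrable_cdf_atMost:
  "set_integrable lborel {..x} (cdf M)"
proof -
  have "(\<integral>\<^sup>+t. ennreal (norm (indicator {..x} t *\<^sub>R cdf M t)) \<partial>lborel)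
      = (\<integral>\<^sup>+t. indicator {..x} t * ennreal (cdf M t) \<partial>lborel)"
    by (intro nn_integral_cong) (simp add: cdf_nonneg indicator_def)
  also have "\<dots> = (\<integral>\<^sup>+s. ennreal (x - s) \<partial>M)"
    by (rule nn_integral_cdf_atMost)
  also have "\<dots> \<le> (\<integral>\<^sup>+s. ennreal (\<bar>x\<bar> + \<bar>s\<bar>) \<partial>M)"
    by (intro nn_integral_mono ennreal_leI) auto
  also have "\<dots> = ennreal (\<integral>s. \<bar>x\<bar> + \<bar>s\<bar> \<partial>M)"
    using integrable_id by (intro nn_integral_eq_integral) auto
  also have "\<dots> < \<infinity>"
    by simp
  finally have "(\<integral>\<^sup>+t. ennreal (norm (indicator {..x} t *\<^sub>R cdf M t)) \<partial>lborel) < \<infinity>" .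
  moreover have "cdf M \<in> borel_measurable borel"
    by (intro borel_measurable_mono) (simp add: mono_def cdf_nondecreasing)
  ultimately show ?thesis
    unfolding set_integrable_def by (intro integrableI_bounded) simp_all
qed

lemma cond_P_of_cond_wP:
  assumes "cond_wP m thi M phit phid" "0 < e" "c \<le> phid"
  shows "cond_P m thi M (phit - e) c"
proof -
  have "integrable M (\<lambda>s. indicator {m + a..thi} s *\<^sub>R (s - (m + a)))" for a
    using integrable_id by (intro integrable_mult_indicator) auto
  moreover have "indicator {m + phid..thi} s *\<^sub>R (s - (m + phid))
      \<le> indicator {m + c..thi} s *\<^sub>R (s - (m + c))" for s
    using assms(3) by (simp add: indicator_def)
  ultimately have "(\<integral>s\<in>{m + phid..thi}. (s - (m + phid)) \<partial>M)
      \<le> (\<integral>s\<in>{m + c..thi}. (s - (m + c)) \<partial>M)"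
    unfolding set_lebesgue_integral_def by (intro integral_mono)
  then show ?thesis using assms(1,2) by (simp add: cond_P_def cond_wP_def)
qed

end

lemma mpc_integrable_real_distribution: "mpc G F \<Longrightarrow> integrable_real_distribution G"
  by (simp add: mpc_def is_dist_def integrable_real_distribution_def real_distribution_def
      real_distribution_axioms_def integrable_real_distribution_axioms_def)

lemma mpc_cdf_eq_0:
  assumes mpc: "mpc G F" and F0: "\<forall>s\<le>x. cdf F s = 0" and "t < x"
  shows "cdf G t = 0"
proof -
  interpret G: integrable_real_distribution G
    using mpc by (rule mpc_integrable_real_distribution)
  have "(\<lambda>s. indicator {..x} s *\<^sub>R cdf F s) = (\<lambda>s. 0)"
    using F0 by (simp add: fun_eq_iff indicator_def)
  then have "(\<integral>s\<in>{..x}. cdf F s \<partial>lborel) = 0"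
    by (simp add: set_lebesgue_integral_def)
  moreover have "(\<integral>s\<in>{..x}. cdf G s \<partial>lborel) \<le> (\<integral>s\<in>{..x}. cdf F s \<partial>lborel)"
    using mpc unfolding mpc_def by blast
  ultimately have "(\<integral>s\<in>{..x}. cdf G s \<partial>lborel) \<le> 0" by simp
  moreover have "(x - t) * cdf G t \<le> (\<integral>s\<in>{..x}. cdf G s \<partial>lborel)"
  proof -
    have "(x - t) * cdf G t = (\<integral>s. indicator {t..x} s * cdf G t \<partial>lborel)"
      using \<open>t < x\<close> by simp
    also have "\<dots> \<le> (\<integral>s\<in>{..x}. cdf G s \<partial>lborel)"
      unfolding set_lebesgue_integral_def
    proof (rule integral_mono)
      show "integrable lborel (\<lambda>s. indicator {t..x} s * cdf G t)"
        using borel_integrable_atLeastAtMost'[of t x "\<lambda>_. cdf G t"] by (simp add: set_integrable_def)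
      show "integrable lborel (\<lambda>s. indicator {..x} s *\<^sub>R cdf G s)"
        using G.set_integrable_cdf_atMost unfolding set_integrable_def .
      show "indicator {t..x} s * cdf G t \<le> indicator {..x} s *\<^sub>R cdf G s" for s
        using G.cdf_nondecreasing[of t s] G.cdf_nonneg[of s] by (simp add: indicator_def)
    qed
    finally show ?thesis .
  qed
  ultimately have "(x - t) * cdf G t \<le> 0" by simp
  then show ?thesis using \<open>t < x\<close> G.cdf_nonneg[of t] by (simp add: mult_le_0_iff)
qed

locale bounded_below_distribution = integrable_real_distribution +
  assumes cdf_eq_0_somewhere: "\<exists>x. cdf M x = 0"
begin

lemma bdd_below_cdf_pos: "bdd_below {x. cdf M x > 0}"
proof -
  obtain x0 where "cdf M x0 = 0" using cdf_eq_0_somewhere ..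
  then have "x0 \<le> x" if "cdf M x > 0" for x
    using that cdf_nondecreasing[of x x0] by force
  then show ?thesis by (intro bdd_belowI) auto
qed

lemma cdf_pos_nonempty: "{x. cdf M x > 0} \<noteq> {}"
proof -
  have "\<forall>\<^sub>F i in sequentially. cdf M (real i) > 0"
    using order_tendstoD(1)[OF cdf_lim_infty_prob] by simp
  then obtain i where "cdf M (real i) > 0" by (auto simp: eventually_sequentially)
  then show ?thesis by auto
qed

lemma low_supp_le: "cdf M t > 0 \<Longrightarrow> low_supp M \<le> t"
  unfolding low_supp_def by (intro cInf_lower bdd_below_cdf_pos) simp

lemma cdf_pos_above_low_supp:
  assumes "low_supp M < t"
  shows "cdf M t > 0"
proof -
  obtain x where "cdf M x > 0" "x < t"
    using assms cInf_less_iff[OF cdf_pos_nonempty bdd_below_cdf_pos] by (auto simp: low_supp_def)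
  then show ?thesis using cdf_nondecreasing[of x t] by simp
qed

lemma le_low_supp: "cdf M t = 0 \<Longrightarrow> t \<le> low_supp M"
  by (rule ccontr) (use cdf_pos_above_low_supp[of t] in auto)

lemma cond_mean_below_le:
  assumes "low_supp M \<le> t"
  shows "cond_mean_below M t \<le> t"
proof (cases "cdf M t > 0")
  case True
  then show ?thesis using partial_mean_le[of t] by (simp add: cond_mean_below_eq divide_le_eq)
qed (use assms in \<open>simp add: cond_mean_below_def\<close>)

lemma cond_wHE_fee_nonneg: "cond_wHE M phid tau \<Longrightarrow> 0 \<le> phid"
  using cond_mean_below_le[of tau] by (simp add: cond_wHE_def)

definition he_threshold :: "real \<Rightarrow> real" where
  "he_threshold c = Sup {t. he_gap c t \<le> 0}"

lemma he_gap_nonpos_nonempty: "{t. he_gap c t \<le> 0} \<noteq> {}"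
proof -
  obtain x0 where "cdf M x0 = 0" using cdf_eq_0_somewhere ..
  then have "x0 \<in> {t. he_gap c t \<le> 0}" by (simp add: he_gap_eq_0)
  then show ?thesis by blast
qed

lemma bdd_above_he_gap_nonpos: "bdd_above {t. he_gap c t \<le> 0}"
proof -
  obtain t1 where t1: "cdf M t1 > 0" using cdf_pos_nonempty by auto
  define b where "b = t1 + (\<bar>c\<bar> - he_gap c t1) / cdf M t1"
  have "t \<le> max t1 b" if "he_gap c t \<le> 0" for t
  proof (cases "t1 \<le> t")
    case True
    have "c * (cdf M t - cdf M t1) \<le> \<bar>c\<bar> * (cdf M t - cdf M t1)"
      using cdf_nondecreasing[OF True] by (intro mult_right_mono) auto
    also have "\<dots> \<le> \<bar>c\<bar>"
      using cdf_bounded_prob[of t] cdf_nonneg[of t1] by (intro mult_left_le) auto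
    finally have "c * (cdf M t - cdf M t1) \<le> \<bar>c\<bar>" .
    then have "(t - t1) * cdf M t1 \<le> \<bar>c\<bar> - he_gap c t1"
      using he_gap_increment_lower[OF True, of c] that by linarith
    then have "t - t1 \<le> (\<bar>c\<bar> - he_gap c t1) / cdf M t1"
      using t1 by (simp add: le_divide_eq)
    then show ?thesis by (simp add: b_def)
  qed simp
  then show ?thesis by (intro bdd_aboveI) auto
qed

lemma he_gap_pos_above_threshold:
  assumes "he_threshold c < t"
  shows "0 < he_gap c t"
proof (rule ccontr)
  assume "\<not> 0 < he_gap c t"
  then have "t \<le> he_threshold c"
    unfolding he_threshold_def by (intro cSup_upper bdd_above_he_gap_nonpos) simp
  with assms show False by simp
qed

lemma he_gap_threshold_eq_0:
  assumes "0 \<le> c"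
  shows "he_gap c (he_threshold c) = 0"
proof -
  let ?T = "he_threshold c"
  have "he_gap c ?T \<le> 0 + d" if d: "d > 0" for d
  proof -
    obtain t where t: "he_gap c t \<le> 0" "?T - d < t"
      using d less_cSup_iff[OF he_gap_nonpos_nonempty bdd_above_he_gap_nonpos, of "?T - d" c]
      by (auto simp: he_threshold_def)
    have "t \<le> ?T"
      unfolding he_threshold_def using t(1) by (intro cSup_upper bdd_above_he_gap_nonpos) simp
    moreover have "(?T - t) * cdf M ?T \<le> ?T - t"
      using \<open>t \<le> ?T\<close> cdf_bounded_prob by (simp add: mult_left_le)
    moreover have "0 \<le> c * (cdf M ?T - cdf M t)"
      using assms cdf_nondecreasing[OF \<open>t \<le> ?T\<close>] by simp
    ultimately show ?thesis using he_gap_increment_upper[OF \<open>t \<le> ?T\<close>, of c] t by linarith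
  qed
  moreover have "0 \<le> he_gap c ?T + d" if "d > 0" for d
  proof -
    have "d * cdf M (?T + d) \<le> d"
      using that cdf_bounded_prob by (simp add: mult_left_le)
    moreover have "0 \<le> c * (cdf M (?T + d) - cdf M ?T)"
      using assms that cdf_nondecreasing[of ?T "?T + d"] by simp
    moreover have "0 < he_gap c (?T + d)"
      using that by (intro he_gap_pos_above_threshold) simp
    moreover have "he_gap c (?T + d)
        \<le> he_gap c ?T + d * cdf M (?T + d) - c * (cdf M (?T + d) - cdf M ?T)"
      using he_gap_increment_upper[of ?T "?T + d" c] that by simp
    ultimately show ?thesis by linarith
  qed
  ultimately show ?thesis by (meson antisym field_le_epsilon)
qed

lemma cond_HE_he_threshold:
  assumes "0 \<le> c"
  shows "cond_HE M c (he_threshold c)"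
proof -
  let ?T = "he_threshold c"
  have above: "cdf M t > 0 \<and> cond_mean_below M t < t - c" if "?T < t" for t
  proof -
    have "0 < he_gap c t" using he_gap_pos_above_threshold[OF that] .
    moreover from this have "cdf M t > 0"
      using he_gap_eq_0[of t c] cdf_nonneg[of t] by (cases "cdf M t = 0") auto
    ultimately show ?thesis using he_gap_pos_iff by blast
  qed
  have low: "low_supp M \<le> ?T"
  proof (rule dense_ge)
    fix t assume "?T < t"
    then show "low_supp M \<le> t" using above low_supp_le by blast
  qed
  have "?T - c = cond_mean_below M ?T"
  proof (cases "cdf M ?T > 0")
    case True
    then show ?thesis using he_gap_threshold_eq_0[OF assms] he_gap_eq_0_iff by blast
  next
    case False
    then have cdf0: "cdf M ?T = 0" using cdf_nonneg[of ?T] by simp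
    \<comment> \<open>a threshold carrying no mass forces \<open>c = 0\<close> and is then the lowest support point\<close>
    have "c = 0"
    proof (rule ccontr)
      assume "c \<noteq> 0"
      then have "0 < he_gap c (?T + c)"
        using assms by (intro he_gap_pos_above_threshold) simp
      moreover have "he_gap c (?T + c) \<le> 0"
        using he_gap_increment_upper[of ?T "?T + c" c] assms cdf0 he_gap_eq_0[OF cdf0] by simp
      ultimately show False by simp
    qed
    moreover have "?T = low_supp M" using low le_low_supp[OF cdf0] by simp
    ultimately show ?thesis using cdf0 by (simp add: cond_mean_below_def)
  qed
  then show ?thesis using low above by (simp add: cond_HE_def)
qed

lemma he_threshold_mono:
  assumes "c \<le> c'"
  shows "he_threshold c \<le> he_threshold c'"
  unfolding he_threshold_def
proof (intro cSup_subset_mono he_gap_nonpos_nonempty bdd_above_he_gap_nonpos subsetI)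
  fix t assume "t \<in> {t. he_gap c t \<le> 0}"
  then show "t \<in> {t. he_gap c' t \<le> 0}" using he_gap_antimono[OF assms, of t] by simp
qed

lemma he_threshold_le_cond_wHE:
  assumes wHE: "cond_wHE M phid tau" and "c < phid"
  shows "he_threshold c \<le> tau"
  unfolding he_threshold_def
proof (intro cSup_least he_gap_nonpos_nonempty)
  fix t assume "t \<in> {t. he_gap c t \<le> 0}"
  then have gap: "he_gap c t \<le> 0" by simp
  show "t \<le> tau"
  proof (rule ccontr)
    assume "\<not> t \<le> tau"
    then have "cdf M t > 0" "cond_mean_below M t \<le> t - phid"
      using wHE cdf_pos_above_low_supp by (auto simp: cond_wHE_def)
    moreover from this \<open>c < phid\<close> have "cond_mean_below M t < t - c" by linarith
    ultimately show False using gap he_gap_pos_iff by force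
  qed
qed

lemma disclosure_revenue_approx:
  assumes wHE: "cond_wHE M phid tau"
  obtains c L where "\<And>n. 0 \<le> c n" "\<And>n. c n \<le> phid" "c \<longlonglongrightarrow> phid"
    "(\<lambda>n. c n * (1 - cdf M (he_threshold (c n)))) \<longlonglongrightarrow> L" "phid * (1 - cdf M tau) \<le> L"
proof -
  have "0 \<le> phid" using wHE by (rule cond_wHE_fee_nonneg)
  define c where "c n = phid * (1 - inverse (real (Suc n)))" for n
  have c_nonneg: "0 \<le> c n" and c_le: "c n \<le> phid" for n
    using \<open>0 \<le> phid\<close> by (auto simp: c_def field_simps)
  have c_lt: "c n < phid" if "0 < phid" for n
    using that by (simp add: c_def)
  have "incseq c"
    using \<open>0 \<le> phid\<close> by (intro incseq_SucI) (simp add: c_def mult_left_mono)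
  have "c \<longlonglongrightarrow> phid * (1 - 0)"
    unfolding c_def by (intro tendsto_intros LIMSEQ_inverse_real_of_nat)
  have "incseq (\<lambda>n. cdf M (he_threshold (c n)))"
    using \<open>incseq c\<close> by (intro monoI cdf_nondecreasing he_threshold_mono) (simp add: incseq_def)
  then obtain \<gamma> where \<gamma>: "(\<lambda>n. cdf M (he_threshold (c n))) \<longlonglongrightarrow> \<gamma>"
    using cdf_bounded_prob by (metis incseq_convergent)
  have "phid * cdf M (he_threshold (c n)) \<le> phid * cdf M tau" for n
  proof (cases "phid = 0")
    case False
    then show ?thesis
      using \<open>0 \<le> phid\<close> c_lt he_threshold_le_cond_wHE[OF wHE]
      by (intro mult_left_mono cdf_nondecreasing) auto
  qed simp
  then have "phid * \<gamma> \<le> phid * cdf M tau"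
    by (intro LIMSEQ_le_const2[OF tendsto_mult_left[OF \<gamma>]]) auto
  moreover have "(\<lambda>n. c n * (1 - cdf M (he_threshold (c n)))) \<longlonglongrightarrow> phid * (1 - \<gamma>)"
    using \<open>c \<longlonglongrightarrow> phid * (1 - 0)\<close> \<gamma> by (auto intro!: tendsto_intros)
  ultimately show ?thesis
    using c_nonneg c_le \<open>c \<longlonglongrightarrow> phid * (1 - 0)\<close>
    by (intro that[of c "phid * (1 - \<gamma>)"]) (simp_all add: algebra_simps)
qed

end

theorem lemma7:
  fixes F G :: "real measure" and tlo thi phit phid tau :: real
  assumes F: "is_dist F" and supp: "measure F {tlo..thi} = 1"
    and bounds: "0 \<le> tlo" "tlo < thi"
    and G: "mpc G F"
    and wP: "cond_wP (mean F) thi G phit phid"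
    and wHE: "cond_wHE G phid tau"
  shows "\<exists>(Gs :: nat \<Rightarrow> real measure) phits phids taus L.
           (\<forall>n. mpc (Gs n) F \<and> cond_P (mean F) thi (Gs n) (phits n) (phids n)
                  \<and> cond_HE (Gs n) (phids n) (taus n))
         \<and> weak_conv_m Gs G \<and> phits \<longlonglongrightarrow> phit \<and> phids \<longlonglongrightarrow> phid
         \<and> (\<lambda>n. Rhat (Gs n) (phits n) (phids n) (taus n)) \<longlonglongrightarrow> L
         \<and> Rhat G phit phid tau \<le> L"
proof -
  interpret F: real_distribution F
    using F by (simp add: is_dist_def real_distribution_def real_distribution_axioms_def)
  interpret G: integrable_real_distribution G
    using G by (rule mpc_integrable_real_distribution)
  have "cdf G (tlo - 2) = 0"
    using F.cdf_eq_0_below_support[OF supp] by (intro mpc_cdf_eq_0[OF G, of "tlo - 1"]) auto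
  then interpret G: bounded_below_distribution G
    by unfold_locales blast
  obtain c L where c: "\<And>n. 0 \<le> c n" "\<And>n. c n \<le> phid" "c \<longlonglongrightarrow> phid"
    and L: "(\<lambda>n. c n * (1 - cdf G (G.he_threshold (c n)))) \<longlonglongrightarrow> L" "phid * (1 - cdf G tau) \<le> L"
    using G.disclosure_revenue_approx[OF wHE] by blast
  define e :: "nat \<Rightarrow> real" where "e n = inverse (real (Suc n))" for n
  have "(\<lambda>n. phit - e n) \<longlonglongrightarrow> phit"
    using tendsto_diff[OF tendsto_const LIMSEQ_inverse_real_of_nat] by (simp add: e_def)
  moreover from this have "(\<lambda>n. Rhat G (phit - e n) (c n) (G.he_threshold (c n))) \<longlonglongrightarrow> phit + L"
    using tendsto_add[OF _ L(1)] by (simp add: Rhat_def)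
  moreover have "cond_P (mean F) thi G (phit - e n) (c n)" for n
    using wP c(2) by (intro G.cond_P_of_cond_wP) (auto simp: e_def)
  moreover have "weak_conv_m (\<lambda>n. G) G"
    by (simp add: weak_conv_m_def weak_conv_def)
  ultimately show ?thesis
    using G c G.cond_HE_he_threshold L(2)
    by (intro exI[of _ "\<lambda>n. G"] exI[of _ "\<lambda>n. phit - e n"] exI[of _ c]
        exI[of _ "\<lambda>n. G.he_threshold (c n)"] exI[of _ "phit + L"]) (auto simp: Rhat_def)
qed

end
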